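(* There exist $d\ge1$, a partition of $\{1,\dots,d\}$ into sets $\mathcal{D},\mathcal{U}$, a causal graph with contribution matrix $\mathbb{C}$, cost weights $c\in\mathbb{R}^d$ with $c_f>0$, an exponent $p\ge1$, a deficit $\alpha>0$ and $\beta\in(0,1)$ such that the set $$\mathcal{H}=\{h_0\in\mathbb{R}^d:\ \mathbb{C}h_0\ge0\ \text{and every optimal solution of } \min_{e\ge0}\Big(\sum_f c_fe_f^{\,p}\Big)^{1/p}\ \text{s.t.}\ (\mathbb{C}h_0)^\top e\ge\alpha\ \text{is }\beta\text{-desirable}\}$$ of $\beta$-desirable classifiers is not convex.
   Context: A causal graph is a weighted directed acyclic graph on $\{1,\dots,d\}$ with adjacency matrix $A$ ($A_{ij}$ the weight of edge $i\to j$, $0$ if absent); its contribution matrix is $\mathbb{C}=\sum_{k=0}^{d}A^k$. $\mathcal{D}$ is the set of desirable features and $\mathcal{U}$ the set of undesirable features. An effort profile $e$ is $\beta$-desirable if $\|e_{\mathcal{D}}\|_2\ge\beta\|e\|_2$, where $e_{\mathcal{D}}$ is the restriction of $e$ to coordinates in $\mathcal{D}$. *)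

theory Defs
  imports Complex_Main
begin

text \<open>Coordinates are indexed by 0..d-1 (the paper's 1..d shifted by one).
  Vectors in R^d are functions nat => real, d x d matrices are nat => nat => real;
  only entries with indices < d are relevant.\<close>

definition mat_mul :: "nat \<Rightarrow> (nat \<Rightarrow> nat \<Rightarrow> real) \<Rightarrow> (nat \<Rightarrow> nat \<Rightarrow> real) \<Rightarrow> nat \<Rightarrow> nat \<Rightarrow> real" where
  "mat_mul d X Y = (\<lambda>i j. \<Sum>k<d. X i k * Y k j)"

fun mat_pow :: "nat \<Rightarrow> (nat \<Rightarrow> nat \<Rightarrow> real) \<Rightarrow> nat \<Rightarrow> nat \<Rightarrow> nat \<Rightarrow> real" where
  "mat_pow d A 0 = (\<lambda>i j. if i = j then 1 else 0)"
| "mat_pow d A (Suc n) = mat_mul d (mat_pow d A n) A"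

definition mat_vec :: "nat \<Rightarrow> (nat \<Rightarrow> nat \<Rightarrow> real) \<Rightarrow> (nat \<Rightarrow> real) \<Rightarrow> nat \<Rightarrow> real" where
  "mat_vec d M v = (\<lambda>i. \<Sum>j<d. M i j * v j)"

definition edges :: "nat \<Rightarrow> (nat \<Rightarrow> nat \<Rightarrow> real) \<Rightarrow> (nat \<times> nat) set" where
  "edges d A = {(i, j). i < d \<and> j < d \<and> A i j \<noteq> 0}"

definition causal_graph :: "nat \<Rightarrow> (nat \<Rightarrow> nat \<Rightarrow> real) \<Rightarrow> bool" where
  "causal_graph d A \<longleftrightarrow> acyclic (edges d A) \<and> (\<forall>i j. (i \<ge> d \<or> j \<ge> d) \<longrightarrow> A i j = 0)"

definition contribution :: "nat \<Rightarrow> (nat \<Rightarrow> nat \<Rightarrow> real) \<Rightarrow> nat \<Rightarrow> nat \<Rightarrow> real" where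
  "contribution d A = (\<lambda>i j. \<Sum>k\<in>{0..d}. mat_pow d A k i j)"

definition beta_desirable :: "nat \<Rightarrow> nat set \<Rightarrow> real \<Rightarrow> (nat \<Rightarrow> real) \<Rightarrow> bool" where
  "beta_desirable d D \<beta> e \<longleftrightarrow>
     sqrt (\<Sum>i\<in>D. (e i)\<^sup>2) \<ge> \<beta> * sqrt (\<Sum>i<d. (e i)\<^sup>2)"

definition cost :: "nat \<Rightarrow> (nat \<Rightarrow> real) \<Rightarrow> real \<Rightarrow> (nat \<Rightarrow> real) \<Rightarrow> real" where
  "cost d c p e = (\<Sum>f<d. c f * (e f) powr p) powr (1 / p)"

definition feasible :: "nat \<Rightarrow> (nat \<Rightarrow> nat \<Rightarrow> real) \<Rightarrow> real \<Rightarrow> (nat \<Rightarrow> real) \<Rightarrow> (nat \<Rightarrow> real) \<Rightarrow> bool" where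
  "feasible d C \<alpha> h0 e \<longleftrightarrow>
     (\<forall>i<d. e i \<ge> 0) \<and> (\<Sum>i<d. mat_vec d C h0 i * e i) \<ge> \<alpha>"

definition optimal :: "nat \<Rightarrow> (nat \<Rightarrow> nat \<Rightarrow> real) \<Rightarrow> (nat \<Rightarrow> real) \<Rightarrow> real \<Rightarrow> real \<Rightarrow> (nat \<Rightarrow> real) \<Rightarrow> (nat \<Rightarrow> real) \<Rightarrow> bool" where
  "optimal d C c p \<alpha> h0 e \<longleftrightarrow>
     feasible d C \<alpha> h0 e \<and> (\<forall>e'. feasible d C \<alpha> h0 e' \<longrightarrow> cost d c p e \<le> cost d c p e')"

definition desirable_classifiers ::
  "nat \<Rightarrow> nat set \<Rightarrow> (nat \<Rightarrow> nat \<Rightarrow> real) \<Rightarrow> (nat \<Rightarrow> real) \<Rightarrow> real \<Rightarrow> real \<Rightarrow> real \<Rightarrow> (nat \<Rightarrow> real) set" where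
  "desirable_classifiers d D C c p \<alpha> \<beta> =
     {h0. (\<forall>i\<ge>d. h0 i = 0) \<and> (\<forall>i<d. mat_vec d C h0 i \<ge> 0) \<and>
          (\<forall>e. optimal d C c p \<alpha> h0 e \<longrightarrow> beta_desirable d D \<beta> e)}"

end

theory Submission
  imports Defs
begin

text \<open>With linear costs (\<open>p = 1\<close>, unit weights) an optimal agent puts all of its effort
  on features of maximal contribution \<open>(\<C> h\<^sub>0)\<^sub>f\<close>. Take the empty graph on three
  features, so \<open>\<C> = I\<close>, with \<open>\<D> = {0, 1}\<close>. The classifiers \<open>(1, 0, 1/2)\<close> and \<open>(0, 1, 1/2)\<close>
  each have a unique maximal contribution, at a desirable feature, so all their optimal
  efforts are desirable. Their midpoint \<open>(1/2, 1/2, 1/2)\<close> has a three-way tie, and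
  spending everything on the undesirable feature 2 is then optimal.\<close>

lemma contribution_zero: "contribution d (\<lambda>_ _. 0) = (\<lambda>i j. if i = j then 1 else 0)"
proof (intro ext)
  fix i j
  have "{0..d} = insert 0 {Suc 0..d}" by auto
  moreover have "mat_pow d (\<lambda>_ _. 0) k i j = 0" if "k \<in> {Suc 0..d}" for k
    using that by (cases k) (simp_all add: mat_mul_def)
  ultimately show "contribution d (\<lambda>_ _. 0) i j = (if i = j then 1 else 0)"
    unfolding contribution_def by simp
qed

lemma mat_vec_contribution_zero: "i < d \<Longrightarrow> mat_vec d (contribution d (\<lambda>_ _. 0)) h i = h i"
  by (simp add: mat_vec_def contribution_zero if_distrib[of "\<lambda>x. x * _"] cong: if_cong)

lemma causal_graph_zero: "causal_graph d (\<lambda>_ _. 0)"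
  by (simp add: causal_graph_def edges_def acyclic_def)

lemma cost_unit_weights_linear:
  assumes "\<forall>i<d. e i \<ge> 0"
  shows "cost d (\<lambda>_. 1) 1 e = (\<Sum>i<d. e i)"
proof -
  have "0 \<le> (\<Sum>i<d. e i)"
    using assms by (intro sum_nonneg) auto
  with assms show ?thesis
    by (simp add: cost_def)
qed

lemma feasible_effort_lower_bound:
  assumes "feasible d C \<alpha> h e" and "\<forall>i<d. mat_vec d C h i \<le> m"
  shows "\<alpha> \<le> m * (\<Sum>i<d. e i)"
proof -
  have "\<alpha> \<le> (\<Sum>i<d. mat_vec d C h i * e i)"
    using assms(1) by (simp add: feasible_def)
  also have "\<dots> \<le> (\<Sum>i<d. m * e i)"
    using assms by (intro sum_mono mult_right_mono) (auto simp: feasible_def)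
  finally show ?thesis by (simp add: sum_distrib_left)
qed

lemma feasible_concentrated_effort:
  assumes "k < d" and "0 < mat_vec d C h k" and "0 \<le> \<alpha>"
  shows "feasible d C \<alpha> h (\<lambda>i. if i = k then \<alpha> / mat_vec d C h k else 0)"
  using assms by (simp add: feasible_def if_distrib cong: if_cong)

lemma optimal_if_attains_lower_bound:
  assumes "feasible d C \<alpha> h e" and "\<forall>i<d. mat_vec d C h i \<le> m" and "0 < m"
    and "(\<Sum>i<d. e i) = \<alpha> / m"
  shows "optimal d C (\<lambda>_. 1) 1 \<alpha> h e"
  unfolding optimal_def
proof (intro conjI allI impI)
  fix e' assume "feasible d C \<alpha> h e'"
  then have "\<alpha> / m \<le> (\<Sum>i<d. e' i)"
    using feasible_effort_lower_bound[OF _ assms(2)] \<open>0 < m\<close> by (simp add: field_simps)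
  with assms \<open>feasible d C \<alpha> h e'\<close> show "cost d (\<lambda>_. 1) 1 e \<le> cost d (\<lambda>_. 1) 1 e'"
    by (simp add: cost_unit_weights_linear feasible_def)
qed fact

lemma optimal_effort_vanishes_off_strict_max:
  fixes C :: "nat \<Rightarrow> nat \<Rightarrow> real" and h :: "nat \<Rightarrow> real" and d :: nat
  defines "w \<equiv> mat_vec d C h"
  assumes opt: "optimal d C (\<lambda>_. 1) 1 \<alpha> h e" and "0 \<le> \<alpha>"
    and "k < d" and "0 < w k" and strict: "\<forall>i<d. i \<noteq> k \<longrightarrow> w i < w k"
    and "j < d" and "j \<noteq> k"
  shows "e j = 0"
proof -
  have feas: "feasible d C \<alpha> h e"
    using opt by (simp add: optimal_def)
  then have nonneg: "\<forall>i<d. 0 \<le> e i"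
    by (simp add: feasible_def)
  have "cost d (\<lambda>_. 1) 1 e \<le> cost d (\<lambda>_. 1) 1 (\<lambda>i. if i = k then \<alpha> / w k else 0)"
    using opt feasible_concentrated_effort[of k d C h \<alpha>] \<open>k < d\<close> \<open>0 < w k\<close> \<open>0 \<le> \<alpha>\<close>
    unfolding optimal_def w_def by blast
  then have "w k * (\<Sum>i<d. e i) \<le> \<alpha>"
    using \<open>k < d\<close> \<open>0 < w k\<close> \<open>0 \<le> \<alpha>\<close> nonneg
    by (simp add: cost_unit_weights_linear field_simps)
  moreover have "\<alpha> \<le> (\<Sum>i<d. w i * e i)"
    using feas by (simp add: feasible_def w_def)
  ultimately have "(\<Sum>i<d. (w k - w i) * e i) \<le> 0"
    by (simp add: left_diff_distrib sum_subtractf sum_distrib_left)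
  moreover have "(w k - w j) * e j \<le> (\<Sum>i<d. (w k - w i) * e i)"
    using \<open>j < d\<close> strict nonneg \<open>k < d\<close>
    by (intro member_le_sum) (auto simp: less_imp_le intro!: mult_nonneg_nonneg)
  ultimately have "(w k - w j) * e j \<le> 0"
    by linarith
  moreover have "0 < w k - w j"
    using strict \<open>j < d\<close> \<open>j \<noteq> k\<close> by simp
  ultimately show "e j = 0"
    using nonneg \<open>j < d\<close> by (force simp: mult_le_0_iff)
qed

lemma beta_desirable_if_supported_in:
  assumes "D \<subseteq> {..<d}" and "\<beta> \<le> 1" and "\<forall>i<d. i \<notin> D \<longrightarrow> e i = 0"
  shows "beta_desirable d D \<beta> e"
proof -
  have "(\<Sum>i\<in>D. (e i)\<^sup>2) = (\<Sum>i<d. (e i)\<^sup>2)"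
    using assms by (intro sum.mono_neutral_left) auto
  then show ?thesis
    using mult_right_mono[OF \<open>\<beta> \<le> 1\<close>, of "sqrt (\<Sum>i<d. (e i)\<^sup>2)"]
    by (simp add: beta_desirable_def sum_nonneg)
qed

lemma not_beta_desirable_if_vanishes_on:
  assumes "0 < \<beta>" and "\<forall>i\<in>D. e i = 0" and "k < d" and "e k \<noteq> 0"
  shows "\<not> beta_desirable d D \<beta> e"
proof -
  have "0 < (e k)\<^sup>2" using \<open>e k \<noteq> 0\<close> by simp
  also have "\<dots> \<le> (\<Sum>i<d. (e i)\<^sup>2)"
    using \<open>k < d\<close> by (intro member_le_sum) auto
  finally have "0 < \<beta> * sqrt (\<Sum>i<d. (e i)\<^sup>2)"
    using \<open>0 < \<beta>\<close> by simp
  then show ?thesis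
    using assms by (simp add: beta_desirable_def)
qed

lemma strict_max_in_desirable_classifiers:
  fixes C :: "nat \<Rightarrow> nat \<Rightarrow> real" and h :: "nat \<Rightarrow> real" and d :: nat
  defines "w \<equiv> mat_vec d C h"
  assumes "\<forall>i\<ge>d. h i = 0" and "\<forall>i<d. 0 \<le> w i"
    and "k \<in> D" and "D \<subseteq> {..<d}" and "0 < w k" and "\<forall>i<d. i \<noteq> k \<longrightarrow> w i < w k"
    and "0 \<le> \<alpha>" and "\<beta> \<le> 1"
  shows "h \<in> desirable_classifiers d D C (\<lambda>_. 1) 1 \<alpha> \<beta>"
proof -
  have "beta_desirable d D \<beta> e" if "optimal d C (\<lambda>_. 1) 1 \<alpha> h e" for e
  proof (rule beta_desirable_if_supported_in)
    have "k < d"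
      using \<open>k \<in> D\<close> \<open>D \<subseteq> {..<d}\<close> by auto
    then show "\<forall>i<d. i \<notin> D \<longrightarrow> e i = 0"
      using optimal_effort_vanishes_off_strict_max[OF that \<open>0 \<le> \<alpha>\<close>] assms(4,6,7)
      unfolding w_def by blast
  qed fact+
  then show ?thesis
    using assms by (simp add: desirable_classifiers_def)
qed

lemma max_outside_not_in_desirable_classifiers:
  fixes C :: "nat \<Rightarrow> nat \<Rightarrow> real" and h :: "nat \<Rightarrow> real" and d :: nat
  defines "w \<equiv> mat_vec d C h"
  assumes "k < d" and "k \<notin> D" and "0 < w k" and "\<forall>i<d. w i \<le> w k"
    and "0 < \<alpha>" and "0 < \<beta>"
  shows "h \<notin> desirable_classifiers d D C (\<lambda>_. 1) 1 \<alpha> \<beta>"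
proof -
  define e where "e = (\<lambda>i. if i = k then \<alpha> / w k else 0)"
  have "optimal d C (\<lambda>_. 1) 1 \<alpha> h e"
  proof (rule optimal_if_attains_lower_bound)
    show "feasible d C \<alpha> h e"
      unfolding e_def w_def using assms by (intro feasible_concentrated_effort) simp_all
    show "(\<Sum>i<d. e i) = \<alpha> / w k"
      using \<open>k < d\<close> by (simp add: e_def)
  qed (use assms in \<open>simp_all add: w_def\<close>)
  moreover have "\<not> beta_desirable d D \<beta> e"
    using assms by (intro not_beta_desirable_if_vanishes_on[where k = k]) (auto simp: e_def)
  ultimately show ?thesis
    by (auto simp: desirable_classifiers_def)
qed

theorem lemma3:
  shows "\<exists>d::nat. \<exists>D U :: nat set. \<exists>A :: nat \<Rightarrow> nat \<Rightarrow> real. \<exists>c :: nat \<Rightarrow> real.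
     \<exists>p \<alpha> \<beta> :: real.
       d \<ge> 1 \<and> D \<union> U = {..<d} \<and> D \<inter> U = {} \<and> D \<noteq> {} \<and> U \<noteq> {} \<and>
       causal_graph d A \<and> (\<forall>f<d. c f > 0) \<and> p \<ge> 1 \<and> \<alpha> > 0 \<and> 0 < \<beta> \<and> \<beta> < 1 \<and>
       (\<exists>h1 \<in> desirable_classifiers d D (contribution d A) c p \<alpha> \<beta>.
        \<exists>h2 \<in> desirable_classifiers d D (contribution d A) c p \<alpha> \<beta>.
        \<exists>t::real. 0 \<le> t \<and> t \<le> 1 \<and>
          (\<lambda>i. (1 - t) * h1 i + t * h2 i) \<notin> desirable_classifiers d D (contribution d A) c p \<alpha> \<beta>)"
proof -
  let ?C = "contribution 3 (\<lambda>_ _. 0)"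
  let ?H = "desirable_classifiers 3 {0, 1} ?C (\<lambda>_. 1) 1 1 (1/2)"
  define h1 :: "nat \<Rightarrow> real" where "h1 = (\<lambda>i. if i = 0 then 1 else if i = 2 then 1/2 else 0)"
  define h2 :: "nat \<Rightarrow> real" where "h2 = (\<lambda>i. if i = 1 then 1 else if i = 2 then 1/2 else 0)"
  have three: "{..<3::nat} = {0, 1, 2}" by auto
  have h1: "h1 \<in> ?H"
    by (rule strict_max_in_desirable_classifiers[where k = 0])
      (simp_all add: mat_vec_contribution_zero h1_def three)
  have h2: "h2 \<in> ?H"
    by (rule strict_max_in_desirable_classifiers[where k = 1])
      (simp_all add: mat_vec_contribution_zero h2_def three)
  have midpoint: "(\<lambda>i. (1 - 1/2) * h1 i + 1/2 * h2 i) \<notin> ?H"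
    by (rule max_outside_not_in_desirable_classifiers[where k = 2])
      (simp_all add: mat_vec_contribution_zero h1_def h2_def three)
  have "\<exists>h1\<in>?H. \<exists>h2\<in>?H. \<exists>t::real. 0 \<le> t \<and> t \<le> 1 \<and>
      (\<lambda>i. (1 - t) * h1 i + t * h2 i) \<notin> ?H"
    using midpoint by (intro bexI[OF _ h1] bexI[OF _ h2] exI[of _ "1/2"]) simp
  moreover have "{0, 1} \<union> {2} = {..<3::nat}"
    using three by auto
  ultimately show ?thesis
    using causal_graph_zero[of 3]
    by (intro exI[of _ 3] exI[of _ "{0, 1}"] exI[of _ "{2}"] exI[of _ "\<lambda>_ _. 0"]
        exI[of _ "\<lambda>_. 1"] exI[of _ 1] exI[of _ 1] exI[of _ "1/2"]) simp
qed

end
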